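(* Let $r>0$ and $h<0$. There exists $\boldsymbol{\phi}\in C_c^\infty(\mathbb{R}^2;\mathbb{R}^3)$ such that $$E_{r,h}\Big[\frac{\mathbf{e}_3+t\boldsymbol{\phi}}{|\mathbf{e}_3+t\boldsymbol{\phi}|}\Big]<E_{r,h}[\mathbf{e}_3]=0$$ for all sufficiently small $t\in\mathbb{R}$ with $t\neq0$.
   Context: Maps $\mathbf{n}=(n_1,n_2,n_3):\mathbb{R}^2\to\mathbb{S}^2\subset\mathbb{R}^3$; $\mathbf{e}_3=(0,0,1)$. $D[\mathbf{n}]=\frac12\int|\nabla\mathbf{n}|^2dx$, $H[\mathbf{n}]=\int(\mathbf{n}-\mathbf{e}_3)\cdot(\nabla\times\mathbf{n})dx$ with $\nabla\times\mathbf{n}=(\partial_2n_3,-\partial_1n_3,\partial_1n_2-\partial_2n_1)$, $V[\mathbf{n}]=\frac18\int|\mathbf{n}-\mathbf{e}_3|^4dx$, $Z[\mathbf{n}]=\int(1-n_3)dx$ (integrals over $\mathbb{R}^2$), and $E_{r,h}=D+rH+V+hZ$. *)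

theory Defs
  imports "HOL-Analysis.Analysis"
begin

text \<open>Maps R^2 -> R^3 are modelled as functions real^2 \<Rightarrow> real^3.
  Coordinates of real^2 are indexed by 1,2 and of real^3 by 1,2,3.\<close>

definition e3 :: "real^3" where
  "e3 = vector [0, 0, 1]"

definition pd :: "(real^2 \<Rightarrow> real^3) \<Rightarrow> 2 \<Rightarrow> real^2 \<Rightarrow> real^3" where
  "pd n j x = frechet_derivative n (at x) (axis j 1)"

text \<open>Smoothness (C-infinity): all iterated partial derivatives exist (as Frechet derivatives).\<close>
definition smooth_map :: "(real^2 \<Rightarrow> real^3) \<Rightarrow> bool" where
  "smooth_map f \<longleftrightarrow> (\<exists>S. f \<in> S \<and>
      (\<forall>g\<in>S. (\<forall>x. g differentiable (at x)) \<and> (\<forall>j. pd g j \<in> S)))"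

definition compact_support :: "(real^2 \<Rightarrow> real^3) \<Rightarrow> bool" where
  "compact_support f \<longleftrightarrow> compact (closure {x. f x \<noteq> 0})"

definition curl :: "(real^2 \<Rightarrow> real^3) \<Rightarrow> real^2 \<Rightarrow> real^3" where
  "curl n x = vector [pd n 2 x $ 3, - (pd n 1 x $ 3), pd n 1 x $ 2 - pd n 2 x $ 1]"

definition Dir :: "(real^2 \<Rightarrow> real^3) \<Rightarrow> real" where
  "Dir n = 1/2 * (\<integral>x. (norm (pd n 1 x))\<^sup>2 + (norm (pd n 2 x))\<^sup>2 \<partial>lborel)"

definition Hel :: "(real^2 \<Rightarrow> real^3) \<Rightarrow> real" where
  "Hel n = (\<integral>x. (n x - e3) \<bullet> curl n x \<partial>lborel)"

definition Pot :: "(real^2 \<Rightarrow> real^3) \<Rightarrow> real" where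
  "Pot n = 1/8 * (\<integral>x. (norm (n x - e3)) ^ 4 \<partial>lborel)"

definition Zee :: "(real^2 \<Rightarrow> real^3) \<Rightarrow> real" where
  "Zee n = (\<integral>x. 1 - n x $ 3 \<partial>lborel)"

definition Energy :: "real \<Rightarrow> real \<Rightarrow> (real^2 \<Rightarrow> real^3) \<Rightarrow> real" where
  "Energy r h n = Dir n + r * Hel n + Pot n + h * Zee n"

end

theory Submission
  imports Defs
begin

(* Take \<phi> = f e1 for a smooth radial bump f of radius R, so that the normalized map
   n_t = (e3 + t \<phi>) / |e3 + t \<phi>| tilts e3 in the (e1, e3)-plane by an angle of order t f.
   Since n_t is even and its partial derivatives are odd, the helicity density is odd and
   H[n_t] = 0. The Dirichlet energy is scale invariant, hence O(t^2) uniformly in R, the potential is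
   O(t^4 R^2), while the Zeeman energy is of order t^2 R^2 with the negative factor h.
   For R^2 a large multiple of 1/|h| the energy is therefore negative for all small t \<noteq> 0. *)

definition flat :: "nat \<Rightarrow> real \<Rightarrow> real" where
  "flat k s = (if s > 0 then exp (- 1 / s) / s ^ k else 0)"

lemma flat_nonneg: "0 \<le> flat k s"
  by (simp add: flat_def)

lemma flat_eq_0: "s \<le> 0 \<Longrightarrow> flat k s = 0"
  by (simp add: flat_def)

lemma flat_0_le_1: "flat 0 s \<le> 1"
  by (simp add: flat_def)

lemma flat_0_ge: "1 / 2 \<le> s \<Longrightarrow> exp (- 2) \<le> flat 0 s"
  by (simp add: flat_def field_simps)

lemma flat_2_le_4: "flat 2 s \<le> 4"
proof (cases "s > 0")
  case True
  define z where "z = 1 / s"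
  have "z / 2 \<le> exp (z / 2)"
    using exp_ge_add_one_self[of "z / 2"] by linarith
  then have "(z / 2)\<^sup>2 \<le> (exp (z / 2))\<^sup>2"
    using True by (intro power_mono) (auto simp: z_def)
  also have "\<dots> = exp z"
    by (simp flip: exp_double)
  finally show ?thesis
    using True by (simp add: flat_def z_def exp_minus field_simps)
qed (simp add: flat_def)

lemma flat_has_real_derivative_at_0: "(flat k has_real_derivative 0) (at 0)"
proof -
  have "((\<lambda>y. (inverse y) ^ Suc k / exp (inverse y)) \<longlongrightarrow> 0) (at_right (0::real))"
    by (rule filterlim_compose[OF tendsto_power_div_exp_0 filterlim_inverse_at_top_right])
  then have right: "((\<lambda>y. flat k y / y) \<longlongrightarrow> 0) (at_right 0)"
    by (rule Lim_transform_eventually)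
       (auto simp: eventually_at_right_less flat_def exp_minus field_simps
             intro: eventually_mono[OF eventually_at_right_less])
  have left: "((\<lambda>y. flat k y / y) \<longlongrightarrow> 0) (at_left 0)"
    by (rule tendsto_eventually)
       (auto simp: flat_def intro: eventually_mono[OF eventually_at_left_real[of "-1" 0]])
  show ?thesis
    using filterlim_split_at[OF left right] by (simp add: has_field_derivative_iff flat_def)
qed

lemma flat_has_real_derivative:
  "(flat k has_real_derivative (flat (k + 2) s - real k * flat (k + 1) s)) (at s)"
proof (cases s "0::real" rule: linorder_cases)
  case less
  have "((\<lambda>s. 0) has_real_derivative (flat (k + 2) s - real k * flat (k + 1) s)) (at s)"
    using less by (simp add: flat_def)
  then show ?thesis
    by (rule has_field_derivative_transform_within_open[where S = "{..<0}"])
       (use less in \<open>auto simp: flat_def\<close>)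
next
  case equal
  then show ?thesis
    using flat_has_real_derivative_at_0 by (simp add: flat_def)
next
  case greater
  have "((\<lambda>s. exp (- 1 / s) / s ^ k) has_real_derivative
          (flat (k + 2) s - real k * flat (k + 1) s)) (at s)"
    using greater
    by (auto intro!: derivative_eq_intros simp: flat_def field_simps)
       (cases k, auto)
  then show ?thesis
    by (rule has_field_derivative_transform_within_open[where S = "{0<..}"])
       (use greater in \<open>auto simp: flat_def\<close>)
qed

lemma continuous_on_flat [continuous_intros]:
  "continuous_on A g \<Longrightarrow> continuous_on A (\<lambda>x. flat k (g x))"
  using flat_has_real_derivative
  by (metis DERIV_isCont continuous_at_imp_continuous_on continuous_on_compose2 subset_UNIV)

(* smooth_map asks for a family of maps that is closed under partial derivatives; the functions
   below, multiplied by a fixed vector, form such a family. *)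
inductive_set smooth_fns :: "(real ^ 'n \<Rightarrow> real) set" where
  const: "(\<lambda>x. c) \<in> smooth_fns"
| coord: "(\<lambda>x. x $ i) \<in> smooth_fns"
| add: "f \<in> smooth_fns \<Longrightarrow> g \<in> smooth_fns \<Longrightarrow> (\<lambda>x. f x + g x) \<in> smooth_fns"
| mult: "f \<in> smooth_fns \<Longrightarrow> g \<in> smooth_fns \<Longrightarrow> (\<lambda>x. f x * g x) \<in> smooth_fns"
| flat: "f \<in> smooth_fns \<Longrightarrow> (\<lambda>x. flat k (f x)) \<in> smooth_fns"

lemma smooth_fns_has_derivative:
  assumes "f \<in> smooth_fns"
  shows "\<exists>D. (\<forall>x. (f has_derivative D x) (at x)) \<and> (\<forall>v. (\<lambda>x. D x v) \<in> smooth_fns)"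
  using assms
proof induction
  case (const c)
  show ?case
    by (rule exI[of _ "\<lambda>x v. 0"]) (auto intro: smooth_fns.const)
next
  case (coord i)
  show ?case
    by (rule exI[of _ "\<lambda>x v. v $ i"])
       (auto intro: smooth_fns.const bounded_linear_imp_has_derivative)
next
  case (add f g)
  then obtain Df Dg where "\<forall>x. (f has_derivative Df x) (at x)" "\<forall>v. (\<lambda>x. Df x v) \<in> smooth_fns"
    "\<forall>x. (g has_derivative Dg x) (at x)" "\<forall>v. (\<lambda>x. Dg x v) \<in> smooth_fns"
    by blast
  then show ?case
    by (intro exI[of _ "\<lambda>x v. Df x v + Dg x v"]) (auto intro!: smooth_fns.add has_derivative_add)
next
  case (mult f g)
  then obtain Df Dg where "\<forall>x. (f has_derivative Df x) (at x)" "\<forall>v. (\<lambda>x. Df x v) \<in> smooth_fns"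
    "\<forall>x. (g has_derivative Dg x) (at x)" "\<forall>v. (\<lambda>x. Dg x v) \<in> smooth_fns"
    by blast
  then show ?case
    by (intro exI[of _ "\<lambda>x v. f x * Dg x v + Df x v * g x"])
       (auto intro!: smooth_fns.add smooth_fns.mult has_derivative_mult mult)
next
  case (flat f k)
  then obtain Df where Df: "\<forall>x. (f has_derivative Df x) (at x)" "\<forall>v. (\<lambda>x. Df x v) \<in> smooth_fns"
    by blast
  define flat' where "flat' y = flat (k + 2) y + (- real k) * flat (k + 1) y" for y
  have "((\<lambda>x. flat k (f x)) has_derivative (\<lambda>v. flat' (f x) * Df x v)) (at x)" for x
    using has_derivative_compose[OF Df(1)[rule_format]
        has_field_derivative_imp_has_derivative[OF flat_has_real_derivative]]
    by (simp add: flat'_def)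
  moreover have "(\<lambda>x. flat' (f x) * Df x v) \<in> smooth_fns" for v
    unfolding flat'_def using flat Df by (intro smooth_fns.intros) auto
  ultimately show ?case
    by (intro exI[of _ "\<lambda>x v. flat' (f x) * Df x v"]) auto
qed

lemma smooth_map_scaleR:
  assumes "g \<in> smooth_fns"
  shows "smooth_map (\<lambda>x. g x *\<^sub>R v)"
proof -
  let ?S = "{(\<lambda>x. g x *\<^sub>R v) | g :: real ^ 2 \<Rightarrow> real. g \<in> smooth_fns}"
  have "\<forall>f\<in>?S. (\<forall>x. f differentiable (at x)) \<and> (\<forall>j. pd f j \<in> ?S)"
  proof
    fix f
    assume "f \<in> ?S"
    then obtain g where g: "g \<in> smooth_fns" and f: "f = (\<lambda>x. g x *\<^sub>R v)"
      by blast
    obtain D where D: "\<forall>x. (g has_derivative D x) (at x)" "\<forall>u. (\<lambda>x. D x u) \<in> smooth_fns"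
      using smooth_fns_has_derivative[OF g] by blast
    have f_deriv: "(f has_derivative (\<lambda>u. D x u *\<^sub>R v)) (at x)" for x
      unfolding f by (rule has_derivative_scaleR_left[OF D(1)[rule_format]])
    have "pd f j \<in> ?S" for j
    proof -
      have pd_f: "pd f j = (\<lambda>x. D x (axis j 1) *\<^sub>R v)"
        unfolding pd_def by (simp add: frechet_derivative_at[OF f_deriv, symmetric])
      show ?thesis
        unfolding pd_f
        by (intro CollectI exI[of _ "\<lambda>x. D x (axis j 1)"] conjI refl D(2)[rule_format])
    qed
    with f_deriv show "(\<forall>x. f differentiable (at x)) \<and> (\<forall>j. pd f j \<in> ?S)"
      unfolding differentiable_def by blast
  qed
  moreover have "(\<lambda>x. g x *\<^sub>R v) \<in> ?S"
    using assms by blast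
  ultimately show ?thesis
    unfolding smooth_map_def by (intro exI[of _ ?S] conjI)
qed

lemma compact_supportI:
  assumes "compact K" "\<And>x. x \<notin> K \<Longrightarrow> f x = 0"
  shows "compact_support f"
proof -
  have "closure {x. f x \<noteq> 0} \<subseteq> K"
    using assms by (intro closure_minimal) (auto intro: compact_imp_closed)
  then show ?thesis
    unfolding compact_support_def compact_eq_bounded_closed
    using assms(1) by (meson bounded_subset compact_imp_bounded closed_closure)
qed

lemma integral_odd_eq_0:
  fixes F :: "'a :: euclidean_space \<Rightarrow> real"
  assumes odd: "\<And>x. F (- x) = - F x"
  shows "integral\<^sup>L lborel F = 0"
proof (cases "integrable lborel F")
  case True
  then have [measurable]: "F \<in> borel_measurable borel"
    by simp
  have "integral\<^sup>L lborel F = integral\<^sup>L (distr lborel borel (\<lambda>x. 0 + (- 1) *\<^sub>R x)) F"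
    using lborel_affine[of "- 1 :: real" "0 :: 'a"] by (simp add: density_1)
  also have "\<dots> = - integral\<^sup>L lborel F"
    by (simp add: integral_distr odd)
  finally show ?thesis
    by simp
qed (rule not_integrable_integral_eq)

lemma measure_lborel_cball_vec2: "0 \<le> r \<Longrightarrow> measure lborel (cball (c :: real ^ 2) r) = pi * r\<^sup>2"
  by (simp add: content_cball unit_ball_vol_2)

lemma integrable_indicator_cball:
  "integrable lborel (indicator (cball (c :: 'a :: euclidean_space) r) :: 'a \<Rightarrow> real)"
  by (intro integrable_real_indicator emeasure_lborel_cball_finite) simp

lemma integrable_vanishing_outside_compact:
  fixes f :: "'a :: euclidean_space \<Rightarrow> real"
  assumes "continuous_on UNIV f" "compact K" "\<And>x. x \<notin> K \<Longrightarrow> f x = 0"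
  shows "integrable lborel f"
proof -
  have "integrable lborel (\<lambda>x. indicator K x *\<^sub>R f x)"
    using assms by (intro borel_integrable_compact) (auto intro: continuous_on_subset)
  also have "(\<lambda>x. indicator K x *\<^sub>R f x) = f"
    using assms(3) by (auto simp: fun_eq_iff indicator_def of_bool_def)
  finally show ?thesis .
qed

definition e1 :: "real ^ 3" where
  "e1 = vector [1, 0, 0]"

lemma e1_nth [simp]: "e1 $ 1 = 1" "e1 $ 2 = 0" "e1 $ 3 = 0"
  by (simp_all add: e1_def)

lemma e3_nth [simp]: "e3 $ 1 = 0" "e3 $ 2 = 0" "e3 $ 3 = 1"
  by (simp_all add: e3_def)

lemma norm_vec3_sq: "(norm (v :: real ^ 3))\<^sup>2 = (v $ 1)\<^sup>2 + (v $ 2)\<^sup>2 + (v $ 3)\<^sup>2"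
  unfolding power2_norm_eq_inner by (simp add: inner_vec_def sum_3 power2_eq_square)

definition tilt :: "real \<Rightarrow> real ^ 3" where
  "tilt s = inverse (sqrt (1 + s\<^sup>2)) *\<^sub>R (s *\<^sub>R e1 + e3)"

definition tilt' :: "real \<Rightarrow> real ^ 3" where
  "tilt' s = inverse (sqrt (1 + s\<^sup>2) * (1 + s\<^sup>2)) *\<^sub>R (e1 - s *\<^sub>R e3)"

lemma normalize_e3_plus_e1: "(e3 + s *\<^sub>R e1) /\<^sub>R norm (e3 + s *\<^sub>R e1) = tilt s"
proof -
  have "(norm (e3 + s *\<^sub>R e1))\<^sup>2 = 1 + s\<^sup>2"
    by (simp add: norm_vec3_sq)
  then have "norm (e3 + s *\<^sub>R e1) = sqrt (1 + s\<^sup>2)"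
    by (metis norm_ge_zero real_sqrt_unique)
  then show ?thesis
    by (simp add: tilt_def add.commute)
qed

lemma tilt_has_vector_derivative: "(tilt has_vector_derivative tilt' s) (at s)"
proof -
  define q where "q = sqrt (1 + s\<^sup>2)"
  have q: "0 < q" "q\<^sup>2 = 1 + s\<^sup>2"
    by (auto simp: q_def add_pos_nonneg)
  have p: "0 < 1 + s\<^sup>2"
    by (simp add: add_pos_nonneg)
  have "((\<lambda>s. inverse (sqrt (1 + s\<^sup>2))) has_real_derivative - s / (q * (1 + s\<^sup>2))) (at s)"
    using q by (auto intro!: derivative_eq_intros simp: q_def field_simps power2_eq_square)
  moreover have "((\<lambda>s. s *\<^sub>R e1 + e3) has_vector_derivative e1) (at s)"
    by (auto intro!: derivative_eq_intros)
  ultimately have "(tilt has_vector_derivative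
      (inverse q *\<^sub>R e1 + (- s / (q * (1 + s\<^sup>2))) *\<^sub>R (s *\<^sub>R e1 + e3))) (at s)"
    unfolding tilt_def q_def by (rule has_vector_derivative_scaleR)
  moreover have "inverse q *\<^sub>R e1 + (- s / (q * (1 + s\<^sup>2))) *\<^sub>R (s *\<^sub>R e1 + e3) = tilt' s"
    unfolding tilt'_def q_def[symmetric] vec_eq_iff forall_3
    using q p by (simp add: divide_simps) (simp add: algebra_simps power2_eq_square)
  ultimately show ?thesis
    by simp
qed

lemma norm_tilt'_le_1: "norm (tilt' s) \<le> 1"
proof -
  define q where "q = sqrt (1 + s\<^sup>2)"
  have q: "0 < q" "q\<^sup>2 = 1 + s\<^sup>2"
    by (auto simp: q_def add_pos_nonneg)
  have p: "0 < 1 + s\<^sup>2"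
    by (simp add: add_pos_nonneg)
  have "(norm (tilt' s))\<^sup>2 = (inverse (q * (1 + s\<^sup>2)))\<^sup>2 * (1 + s\<^sup>2)"
    unfolding tilt'_def q_def[symmetric] norm_vec3_sq
    by (simp add: algebra_simps)
  also have "\<dots> = (inverse (q * (1 + s\<^sup>2)))\<^sup>2 * q\<^sup>2"
    using q by simp
  also have "\<dots> = 1 / (1 + s\<^sup>2)\<^sup>2"
    using q by (simp add: divide_simps)
  also have "\<dots> \<le> 1"
    using p by (simp add: divide_le_eq)
  finally show ?thesis
    by (simp add: power_le_one_iff)
qed

lemma norm_tilt_minus_e3_le: "norm (tilt s - e3) \<le> \<bar>s\<bar>"
proof -
  define q where "q = sqrt (1 + s\<^sup>2)"
  have q: "1 \<le> q" "q\<^sup>2 = 1 + s\<^sup>2"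
    by (auto simp: q_def)
  have "(norm (tilt s - e3))\<^sup>2 = (inverse q * s)\<^sup>2 + (inverse q - 1)\<^sup>2"
    unfolding tilt_def q_def[symmetric] norm_vec3_sq by simp
  also have "\<dots> = (s\<^sup>2 + (q - 1)\<^sup>2) / q\<^sup>2"
    using q(1) by (simp add: field_simps power2_eq_square)
  also have "\<dots> \<le> s\<^sup>2"
  proof -
    have "q - 1 \<le> s\<^sup>2"
      using power_increasing[of 1 2 q] q by simp
    then have "(q - 1)\<^sup>2 \<le> (s\<^sup>2)\<^sup>2"
      using q(1) by (intro power_mono) auto
    then have "s\<^sup>2 + (q - 1)\<^sup>2 \<le> s\<^sup>2 * q\<^sup>2"
      using q(2) by (simp add: algebra_simps power2_eq_square)
    then show ?thesis
      using q(1) by (simp add: divide_le_eq)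
  qed
  finally show ?thesis
    using real_le_rsqrt by fastforce
qed

lemma tilt_3: "tilt s $ 3 = 1 / sqrt (1 + s\<^sup>2)"
  by (simp add: tilt_def divide_inverse)

lemma one_minus_tilt_3_ge: "s\<^sup>2 / (2 * (1 + s\<^sup>2)) \<le> 1 - tilt s $ 3"
proof -
  define q where "q = sqrt (1 + s\<^sup>2)"
  have q: "1 \<le> q" "q\<^sup>2 = 1 + s\<^sup>2"
    by (auto simp: q_def)
  have "s\<^sup>2 / (2 * (1 + s\<^sup>2)) = (q\<^sup>2 - 1) / (2 * q\<^sup>2)"
    using q by simp
  also have "\<dots> = 1 / 2 - 1 / (2 * q\<^sup>2)"
    using q(1) by (simp add: field_simps)
  also have "\<dots> \<le> 1 - 1 / q"
  proof -
    have "2 * q \<le> 1 + q\<^sup>2"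
      using zero_le_power2[of "q - 1"] by (simp add: power2_eq_square algebra_simps)
    then have "q * (2 * q) \<le> q * (1 + q\<^sup>2)"
      using q(1) by (intro mult_left_mono) auto
    then show ?thesis
      using q(1) by (simp add: field_simps power2_eq_square)
  qed
  finally show ?thesis
    by (simp add: tilt_3 q_def)
qed

lemma norm_vec2_sq: "(norm (x :: real ^ 2))\<^sup>2 = (x $ 1)\<^sup>2 + (x $ 2)\<^sup>2"
  unfolding power2_norm_eq_inner by (simp add: inner_vec_def sum_2 power2_eq_square)

definition bump :: "real \<Rightarrow> real ^ 2 \<Rightarrow> real" where
  "bump R x = flat 0 (1 - (norm x / R)\<^sup>2)"

definition bump_grad :: "real \<Rightarrow> real ^ 2 \<Rightarrow> real ^ 2" where
  "bump_grad R x = (- 2 * flat 2 (1 - (norm x / R)\<^sup>2) / R\<^sup>2) *\<^sub>R x"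

lemma bump_in_smooth_fns: "bump R \<in> smooth_fns"
proof -
  have "(\<lambda>x :: real ^ 2. flat 0 (1 + (- inverse (R\<^sup>2)) * (x $ 1 * x $ 1 + x $ 2 * x $ 2)))
          \<in> smooth_fns"
    by (intro smooth_fns.intros)
  moreover have "bump R = (\<lambda>x. flat 0 (1 + (- inverse (R\<^sup>2)) * (x $ 1 * x $ 1 + x $ 2 * x $ 2)))"
    unfolding bump_def[abs_def] power_divide norm_vec2_sq
    by (simp add: power2_eq_square divide_inverse algebra_simps)
  ultimately show ?thesis
    by simp
qed

lemma bump_has_derivative: "(bump R has_derivative (\<lambda>v. bump_grad R x \<bullet> v)) (at x)"
proof -
  have eq: "(\<lambda>x. 1 - (norm x / R)\<^sup>2) = (\<lambda>x. 1 - inverse (R\<^sup>2) * (x \<bullet> x))"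
    unfolding power_divide power2_norm_eq_inner by (simp add: divide_inverse mult.commute)
  have "((\<lambda>x. 1 - (norm x / R)\<^sup>2) has_derivative
      (\<lambda>v. - inverse (R\<^sup>2) * (x \<bullet> v + v \<bullet> x))) (at x)"
    unfolding eq by (auto intro!: derivative_eq_intros)
  from has_derivative_compose[OF this
      has_field_derivative_imp_has_derivative[OF flat_has_real_derivative[of 0]]]
  show ?thesis
    by (simp add: bump_def[abs_def] bump_grad_def inner_commute divide_inverse algebra_simps
        numeral_2_eq_2)
qed

lemma continuous_on_bump: "continuous_on A (bump R)"
  unfolding bump_def divide_inverse by (intro continuous_intros)

lemma bump_nonneg: "0 \<le> bump R x"
  by (simp add: bump_def flat_nonneg)

lemma bump_le_1: "bump R x \<le> 1"
  by (simp add: bump_def flat_0_le_1)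

lemma bump_eq_0:
  assumes "0 < R" "R \<le> norm x"
  shows "bump R x = 0"
  using assms by (simp add: bump_def flat_eq_0 divide_simps power2_eq_square mult_mono)

lemma bump_ge:
  assumes "0 < R" "norm x \<le> R / 2"
  shows "exp (- 2) \<le> bump R x"
proof -
  have "(norm x / R)\<^sup>2 \<le> (1 / 2)\<^sup>2"
    using assms by (intro power_mono) (auto simp: divide_simps)
  then have "(norm x / R)\<^sup>2 \<le> 1 / 4"
    by (simp add: power_divide)
  then show ?thesis
    unfolding bump_def by (intro flat_0_ge) linarith
qed

lemma bump_grad_eq_0:
  assumes "0 < R" "R \<le> norm x"
  shows "bump_grad R x = 0"
  using assms by (simp add: bump_grad_def flat_eq_0 divide_simps power2_eq_square mult_mono)

lemma norm_bump_grad_le: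
  assumes "0 < R"
  shows "norm (bump_grad R x) \<le> 8 / R"
proof (cases "norm x < R")
  case True
  have "norm (bump_grad R x) = 2 * flat 2 (1 - (norm x / R)\<^sup>2) * norm x / R\<^sup>2"
    by (simp add: bump_grad_def flat_nonneg)
  also have "\<dots> \<le> 2 * 4 * R / R\<^sup>2"
    using assms True by (intro divide_right_mono mult_mono flat_2_le_4) (auto simp: flat_nonneg)
  finally show ?thesis
    using assms by (simp add: power2_eq_square)
qed (use assms bump_grad_eq_0 in simp)

lemma norm_bump_grad_sq_le:
  assumes "0 < R"
  shows "(norm (bump_grad R x))\<^sup>2 \<le> 64 / R\<^sup>2 * indicator (cball 0 R) x"
proof (cases "x \<in> cball 0 R")
  case True
  have "(norm (bump_grad R x))\<^sup>2 \<le> (8 / R)\<^sup>2"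
    using assms by (intro power_mono norm_bump_grad_le) auto
  then show ?thesis
    using True by (simp add: power_divide)
qed (use assms bump_grad_eq_0 in auto)

lemma bump_minus: "bump R (- x) = bump R x"
  by (simp add: bump_def)

lemma bump_grad_minus: "bump_grad R (- x) = - bump_grad R x"
  by (simp add: bump_grad_def)

definition tilted_bump :: "real \<Rightarrow> real \<Rightarrow> real ^ 2 \<Rightarrow> real ^ 3" where
  "tilted_bump R t x = tilt (t * bump R x)"

lemma normalize_e3_plus_bump:
  "(\<lambda>x. (e3 + t *\<^sub>R (bump R x *\<^sub>R e1)) /\<^sub>R norm (e3 + t *\<^sub>R (bump R x *\<^sub>R e1))) = tilted_bump R t"
  by (simp add: tilted_bump_def normalize_e3_plus_e1 fun_eq_iff)

lemma pd_tilted_bump: "pd (tilted_bump R t) j x = (t * bump_grad R x $ j) *\<^sub>R tilt' (t * bump R x)"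
proof -
  have "((\<lambda>x. t * bump R x) has_derivative (\<lambda>v. t * (bump_grad R x \<bullet> v))) (at x)"
    using bump_has_derivative by (rule has_derivative_mult_right)
  from has_derivative_compose[OF this
      tilt_has_vector_derivative[unfolded has_vector_derivative_def]]
  have "(tilted_bump R t has_derivative
      (\<lambda>v. (t * (bump_grad R x \<bullet> v)) *\<^sub>R tilt' (t * bump R x))) (at x)"
    unfolding tilted_bump_def[abs_def] .
  then show ?thesis
    unfolding pd_def by (simp add: frechet_derivative_at[symmetric] inner_axis)
qed

lemma Hel_tilted_bump: "Hel (tilted_bump R t) = 0"
  unfolding Hel_def
proof (rule integral_odd_eq_0)
  fix x
  have "curl (tilted_bump R t) (- x) = - curl (tilted_bump R t) x"
    by (simp add: curl_def pd_tilted_bump bump_minus bump_grad_minus vec_eq_iff forall_3)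
  then show "(tilted_bump R t (- x) - e3) \<bullet> curl (tilted_bump R t) (- x)
      = - ((tilted_bump R t x - e3) \<bullet> curl (tilted_bump R t) x)"
    by (simp add: tilted_bump_def bump_minus)
qed

lemma Dir_tilted_bump_le:
  assumes "0 < R"
  shows "Dir (tilted_bump R t) \<le> 32 * pi * t\<^sup>2"
proof -
  let ?n = "tilted_bump R t"
  have bound: "(norm (pd ?n 1 x))\<^sup>2 + (norm (pd ?n 2 x))\<^sup>2
      \<le> t\<^sup>2 * (64 / R\<^sup>2) * indicator (cball 0 R) x" for x
  proof -
    have "(norm (pd ?n 1 x))\<^sup>2 + (norm (pd ?n 2 x))\<^sup>2
        = t\<^sup>2 * (norm (bump_grad R x))\<^sup>2 * (norm (tilt' (t * bump R x)))\<^sup>2"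
      by (simp add: pd_tilted_bump norm_vec2_sq algebra_simps)
    also have "\<dots> \<le> t\<^sup>2 * (64 / R\<^sup>2 * indicator (cball 0 R) x) * 1"
      using norm_tilt'_le_1 norm_bump_grad_sq_le[OF assms]
      by (intro mult_mono mult_left_mono power_le_one) auto
    finally show ?thesis
      by simp
  qed
  have "(\<integral>x. (norm (pd ?n 1 x))\<^sup>2 + (norm (pd ?n 2 x))\<^sup>2 \<partial>lborel)
      \<le> (\<integral>x. t\<^sup>2 * (64 / R\<^sup>2) * indicator (cball (0 :: real ^ 2) R) x \<partial>lborel)"
    by (rule integral_mono'[OF integrable_mult_right[OF integrable_indicator_cball]])
       (use bound in auto)
  also have "\<dots> = 64 * pi * t\<^sup>2"
    using assms by (simp add: measure_lborel_cball_vec2)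
  finally show ?thesis
    unfolding Dir_def by simp
qed

lemma Pot_tilted_bump_le:
  assumes "0 < R"
  shows "Pot (tilted_bump R t) \<le> pi * t ^ 4 * R\<^sup>2 / 8"
proof -
  have bound: "(norm (tilted_bump R t x - e3)) ^ 4 \<le> t ^ 4 * indicator (cball 0 R) x" for x
  proof -
    have "(norm (tilted_bump R t x - e3)) ^ 4 \<le> \<bar>t * bump R x\<bar> ^ 4"
      unfolding tilted_bump_def by (intro power_mono norm_tilt_minus_e3_le) auto
    also have "\<dots> \<le> t ^ 4 * indicator (cball 0 R) x"
    proof (cases "x \<in> cball 0 R")
      case True
      have "bump R x ^ 4 \<le> 1"
        by (intro power_le_one bump_nonneg bump_le_1)
      then show ?thesis
        using True by (simp add: power_mult_distrib abs_mult mult_left_le bump_nonneg)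
    qed (use assms bump_eq_0 in auto)
    finally show ?thesis .
  qed
  have "(\<integral>x. (norm (tilted_bump R t x - e3)) ^ 4 \<partial>lborel)
      \<le> (\<integral>x. t ^ 4 * indicator (cball (0 :: real ^ 2) R) x \<partial>lborel)"
    by (rule integral_mono'[OF integrable_mult_right[OF integrable_indicator_cball]])
       (use bound in auto)
  also have "\<dots> = pi * t ^ 4 * R\<^sup>2"
    using assms by (simp add: measure_lborel_cball_vec2)
  finally show ?thesis
    unfolding Pot_def by simp
qed

lemma one_minus_tilted_bump_3_ge:
  "(t * bump R x)\<^sup>2 / (2 * (1 + (t * bump R x)\<^sup>2)) \<le> 1 - tilted_bump R t x $ 3"
  unfolding tilted_bump_def by (rule one_minus_tilt_3_ge)

lemma one_minus_tilted_bump_3_nonneg: "0 \<le> 1 - tilted_bump R t x $ 3"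
  by (rule order_trans[OF _ one_minus_tilted_bump_3_ge]) (simp add: add_pos_nonneg)

lemma one_minus_tilted_bump_3_ge_indicator:
  assumes "0 < R"
  shows "t\<^sup>2 * exp (- 4) / (2 * (1 + t\<^sup>2)) * indicator (cball 0 (R / 2)) x
           \<le> 1 - tilted_bump R t x $ 3"
proof (cases "x \<in> cball 0 (R / 2)")
  case True
  have "exp (- 2) \<le> bump R x"
    using assms True by (intro bump_ge) auto
  then have "(exp (- 2))\<^sup>2 \<le> (bump R x)\<^sup>2"
    by (intro power_mono) auto
  then have lower: "t\<^sup>2 * exp (- 4) \<le> (t * bump R x)\<^sup>2"
    by (simp add: power_mult_distrib mult_left_mono flip: exp_of_nat_mult)
  have "(t * bump R x)\<^sup>2 \<le> t\<^sup>2"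
    using bump_nonneg bump_le_1 by (simp add: power_mult_distrib mult_left_le power_le_one)
  then have "t\<^sup>2 * exp (- 4) / (2 * (1 + t\<^sup>2)) \<le> (t * bump R x)\<^sup>2 / (2 * (1 + (t * bump R x)\<^sup>2))"
    using lower by (intro frac_le) (auto simp: add_pos_nonneg)
  then show ?thesis
    using True one_minus_tilted_bump_3_ge[of t R x] by simp
qed (use one_minus_tilted_bump_3_nonneg in simp)

lemma integrable_one_minus_tilted_bump_3:
  assumes "0 < R"
  shows "integrable lborel (\<lambda>x. 1 - tilted_bump R t x $ 3)"
proof (rule integrable_vanishing_outside_compact)
  show "continuous_on UNIV (\<lambda>x. 1 - tilted_bump R t x $ 3)"
    unfolding tilted_bump_def tilt_3
    by (intro continuous_intros continuous_on_bump) (auto simp: add_nonneg_eq_0_iff)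
  show "1 - tilted_bump R t x $ 3 = 0" if "x \<notin> cball 0 R" for x
    using that assms by (simp add: tilted_bump_def bump_eq_0 tilt_3)
qed simp

lemma Zee_tilted_bump_ge:
  assumes "0 < R"
  shows "pi * t\<^sup>2 * exp (- 4) * R\<^sup>2 / (8 * (1 + t\<^sup>2)) \<le> Zee (tilted_bump R t)"
proof -
  define c where "c = t\<^sup>2 * exp (- 4) / (2 * (1 + t\<^sup>2))"
  have "c * (pi * (R / 2)\<^sup>2) = (\<integral>x. c * indicator (cball (0 :: real ^ 2) (R / 2)) x \<partial>lborel)"
    using assms by (simp add: measure_lborel_cball_vec2)
  also have "\<dots> \<le> Zee (tilted_bump R t)"
    unfolding Zee_def c_def using assms
    by (intro integral_mono' integrable_one_minus_tilted_bump_3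
        one_minus_tilted_bump_3_ge_indicator one_minus_tilted_bump_3_nonneg)
  finally show ?thesis
    unfolding c_def by (simp add: field_simps)
qed

lemma Energy_tilted_bump_le:
  assumes "0 < R" "h \<le> 0"
  shows "Energy r h (tilted_bump R t)
           \<le> pi * t\<^sup>2 * (32 + t\<^sup>2 * R\<^sup>2 / 8 + h * exp (- 4) * R\<^sup>2 / (8 * (1 + t\<^sup>2)))"
proof -
  have "h * Zee (tilted_bump R t) \<le> h * (pi * t\<^sup>2 * exp (- 4) * R\<^sup>2 / (8 * (1 + t\<^sup>2)))"
    using assms by (intro mult_left_mono_neg Zee_tilted_bump_ge) auto
  then show ?thesis
    using Dir_tilted_bump_le[OF assms(1), of t] Pot_tilted_bump_le[OF assms(1), of t]
    by (simp add: Energy_def Hel_tilted_bump algebra_simps power2_eq_square power4_eq_xxxx)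
qed

lemma eventually_Energy_tilted_bump_neg:
  assumes "0 < R" "h * exp (- 4) * R\<^sup>2 < - 256"
  shows "\<forall>\<^sub>F t in at 0. Energy r h (tilted_bump R t) < 0"
proof -
  define B where "B t = 32 + t\<^sup>2 * R\<^sup>2 / 8 + h * exp (- 4) * R\<^sup>2 / (8 * (1 + t\<^sup>2))" for t :: real
  have "h \<le> 0"
    using assms(2) by (smt (verit) exp_gt_zero mult_nonneg_nonneg zero_le_power2)
  have "isCont B 0"
    unfolding B_def by (intro continuous_intros) simp_all
  moreover have "B 0 < 0"
    using assms(2) by (simp add: B_def)
  ultimately have "\<forall>\<^sub>F t in at 0. B t < 0"
    unfolding isCont_def by (rule order_tendstoD)
  then show ?thesis
    using eventually_neq_at_within[of 0 0 UNIV]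
  proof eventually_elim
    case (elim t)
    then have "pi * t\<^sup>2 * B t < 0"
      by (intro mult_pos_neg) auto
    then show ?case
      using Energy_tilted_bump_le[OF assms(1) \<open>h \<le> 0\<close>, of r t] by (simp add: B_def)
  qed
qed

lemma Energy_const_e3: "Energy r h (\<lambda>x. e3) = 0"
proof -
  have "pd (\<lambda>x. e3) j x = 0" for j x
    unfolding pd_def using frechet_derivative_at[OF has_derivative_const] by metis
  then show ?thesis
    by (simp add: Energy_def Dir_def Hel_def Pot_def Zee_def)
qed

theorem theorem5p3:
  fixes r h :: real
  assumes "r > 0" and "h < 0"
  shows "\<exists>\<phi> :: real^2 \<Rightarrow> real^3. smooth_map \<phi> \<and> compact_support \<phi> \<and>
           Energy r h (\<lambda>x. e3) = 0 \<and>
           (\<forall>\<^sub>F t in at (0::real).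
              Energy r h (\<lambda>x. (e3 + t *\<^sub>R \<phi> x) /\<^sub>R norm (e3 + t *\<^sub>R \<phi> x))
                < Energy r h (\<lambda>x. e3))"
proof -
  \<comment> \<open>The helicity of the tilted bump vanishes.\<close>
  define R where "R = sqrt (512 * exp 4 / - h)"
  have R: "0 < R" "h * exp (- 4) * R\<^sup>2 < - 256"
    using \<open>h < 0\<close> by (auto simp: R_def divide_pos_neg exp_minus field_simps)
  have "\<forall>\<^sub>F t in at 0. Energy r h (\<lambda>x. (e3 + t *\<^sub>R (bump R x *\<^sub>R e1)) /\<^sub>R
      norm (e3 + t *\<^sub>R (bump R x *\<^sub>R e1))) < Energy r h (\<lambda>x. e3)"
    unfolding normalize_e3_plus_bump Energy_const_e3
    by (rule eventually_Energy_tilted_bump_neg[OF R])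
  moreover have "compact_support (\<lambda>x. bump R x *\<^sub>R e1)"
    using R(1) by (intro compact_supportI[of "cball 0 R"]) (auto simp: bump_eq_0)
  moreover have "smooth_map (\<lambda>x. bump R x *\<^sub>R e1)"
    by (intro smooth_map_scaleR bump_in_smooth_fns)
  ultimately show ?thesis
    using Energy_const_e3 by blast
qed

end
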